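(* Let $d,N,m$ be positive integers with $m\ge d$. Let $X\in\mathbb{R}^{d\times m}$ satisfy $XX^T=I_d$. Consider the two-layer linear network $f(x)=W_2W_1x$ with $W_1\in\mathbb{R}^{N\times d}$, $W_2\in\mathbb{R}^{1\times N}$, and targets $Y=\beta^TX$ for some $\beta\in\mathbb{R}^d\setminus\{0\}$, $\hat\beta=\beta/\|\beta\|$. Let $0<\sigma\ll1$, let $\|W_2^{(0)}\|_F=\sigma$, and take the rank-one initialization $W_1^{(0)}\in\mathbb{R}^{N\times d}$ whose first row is $\sigma\hat\beta^T$ and whose other rows are zero. With initial NTK $K^{(0)}=X^T\big(W_1^{(0)T}W_1^{(0)}+\|W_2^{(0)}\|^2I_d\big)X$ and final NTK $K^{(f)}=\|\beta\|\,X^T(\hat\beta\hat\beta^T+I_d)X+O(\sigma^2)$, one has $\mathrm{KA}(K^{(f)},K^{(0)})=1+O(\sigma^2)$.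
   Context: $\mathrm{KA}(K^{(f)},K^{(0)})=\dfrac{\operatorname{Tr}(K^{(f)}K^{(0)})}{\|K^{(f)}\|_F\,\|K^{(0)}\|_F}$. The expression for $K^{(f)}$ is the asymptotic neural tangent kernel after training this network by gradient flow on the mean squared error from small initialization, taken as given. *)

theory Defs
  imports "HOL-Analysis.Analysis" "HOL-Library.Landau_Symbols"
begin

definition frob_norm :: "real^'c^'r \<Rightarrow> real" where
  "frob_norm A = sqrt (\<Sum>i\<in>UNIV. \<Sum>j\<in>UNIV. (A $ i $ j)^2)"

definition kernel_alignment :: "real^'m^'m \<Rightarrow> real^'m^'m \<Rightarrow> real" where
  "kernel_alignment K1 K2 = trace (K1 ** K2) / (frob_norm K1 * frob_norm K2)"

definition outer :: "real^'a \<Rightarrow> real^'b \<Rightarrow> real^'b^'a" where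
  "outer u v = (\<chi> i j. u $ i * v $ j)"

end

theory Submission
  imports Defs
begin

(* At the rank-one initialization aligned with the target direction, W1^T W1 = sigma^2 bh bh^T
   and ||W2||^2 = sigma^2, so K0 = sigma^2 X^T (bh bh^T + I) X is exactly a positive multiple of
   the leading term M of Kf.  Kernel alignment is the cosine of the angle between the two kernels
   in the Frobenius inner product, hence insensitive to positive scaling, and the cosine between
   c M + E and M differs from 1 by at most 4 ||E|| / (c ||M||). *)

lemma frob_norm_eq_norm: "frob_norm (A :: real^'c^'r) = norm A"
  unfolding frob_norm_def norm_vec_def L2_set_def by (simp add: power2_abs sum_nonneg)

lemma trace_matrix_mult_eq_inner:
  "trace ((A :: real^'n^'m) ** B) = inner A (transpose B)"
  by (simp add: trace_def inner_vec_def matrix_matrix_mult_def transpose_def)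

lemma kernel_alignment_scaleR_symmetric:
  assumes "a > 0" and "transpose M = M"
  shows "kernel_alignment K (a *\<^sub>R M) = inner K M / (norm K * norm M)"
  using assms
  by (simp add: kernel_alignment_def trace_matrix_mult_eq_inner frob_norm_eq_norm transpose_scalar)

lemma transpose_add: "transpose (A + B) = transpose A + transpose (B :: real^'a^'b)"
  by (simp add: transpose_def vec_eq_iff)

lemma transpose_outer: "transpose (outer u v) = outer (v :: real^'a) (u :: real^'b)"
  by (simp add: transpose_def outer_def vec_eq_iff mult.commute)

lemma outer_scaleR: "outer (a *\<^sub>R u) (b *\<^sub>R v) = (a * b) *\<^sub>R outer u v"
  by (simp add: outer_def vec_eq_iff mult_ac)

lemma outer_self_add_mat_1_neq_0: "outer u u + mat 1 \<noteq> (0 :: real^'a^'a)"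
proof
  fix i :: 'a
  assume "outer u u + mat 1 = 0"
  then have "(outer u u + mat 1) $ i $ i = 0" by simp
  moreover have "(outer u u + mat 1) $ i $ i = (u $ i)^2 + 1"
    by (simp add: outer_def mat_def power2_eq_square)
  ultimately show False using zero_le_power2[of "u $ i"] by linarith
qed

lemma transpose_mult_single_row:
  fixes v :: "real^'d" and k :: "'n::finite"
  defines "W \<equiv> (\<chi> i. if i = k then v else 0) :: real^'d^'n"
  shows "transpose W ** W = outer v v"
  by (simp add: W_def matrix_matrix_mult_def transpose_def outer_def vec_eq_iff
      if_distrib if_distribR cong: if_cong)

lemma conj_semi_orthogonal_eq_0_iff:
  fixes X :: "real^'m^'d" and A :: "real^'d^'d"
  assumes "X ** transpose X = mat 1"
  shows "transpose X ** A ** X = 0 \<longleftrightarrow> A = 0"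
proof
  assume "transpose X ** A ** X = 0"
  then have "X ** (transpose X ** A ** X) ** transpose X = 0" by simp
  also have "X ** (transpose X ** A ** X) ** transpose X
      = (X ** transpose X) ** A ** (X ** transpose X)"
    by (simp add: matrix_mul_assoc)
  finally show "A = 0" using assms by simp
qed simp

lemma inner_normalized_perturbation_bound:
  fixes M E :: "'a::real_inner"
  assumes "M \<noteq> 0" and "c > 0" and small: "norm E \<le> c * norm M / 2"
  shows "\<bar>inner (c *\<^sub>R M + E) M / (norm (c *\<^sub>R M + E) * norm M) - 1\<bar>
           \<le> 4 / (c * norm M) * norm E"
proof -
  define K where "K = c *\<^sub>R M + E"
  define m where "m = norm M"
  define e where "e = norm E"
  have m: "m > 0" and cm: "c * m > 0" using assms(1,2) by (simp_all add: m_def)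
  have norm_K: "\<bar>norm K - c * m\<bar> \<le> e"
    using norm_triangle_ineq3[of K "c *\<^sub>R M"] assms(2) by (simp add: K_def m_def e_def)
  then have K_lower: "norm K \<ge> c * m / 2"
    using small by (simp add: m_def e_def)
  have "c * m^2 - norm K * m = (c * m - norm K) * m"
    by (simp add: power2_eq_square algebra_simps)
  then have "\<bar>c * m^2 - norm K * m\<bar> = \<bar>norm K - c * m\<bar> * m"
    using m by (simp add: abs_mult abs_minus_commute)
  also have "\<dots> \<le> e * m"
    using norm_K m by (simp add: mult_right_mono)
  finally have Km: "\<bar>c * m^2 - norm K * m\<bar> \<le> e * m" .
  have "inner K M = c * m^2 + inner E M"
    by (simp add: K_def m_def inner_add_left power2_norm_eq_inner)
  moreover have "\<bar>inner E M\<bar> \<le> e * m"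
    unfolding e_def m_def by (rule Cauchy_Schwarz_ineq2)
  ultimately have numerator: "\<bar>inner K M - norm K * m\<bar> \<le> 2 * e * m"
    using Km by linarith
  have "norm K > 0" using K_lower cm by linarith
  then have Km_pos: "norm K * m > 0" using m by simp
  have "inner K M / (norm K * m) - 1 = (inner K M - norm K * m) / (norm K * m)"
    using \<open>norm K > 0\<close> m by (simp add: diff_divide_distrib)
  then have "\<bar>inner K M / (norm K * m) - 1\<bar> = \<bar>inner K M - norm K * m\<bar> / (norm K * m)"
    using Km_pos by simp
  also have "\<dots> \<le> 2 * e * m / (norm K * m)"
    using Km_pos by (intro divide_right_mono numerator) simp
  also have "\<dots> \<le> 2 * e * m / (c * m / 2 * m)"
    using K_lower cm m by (intro divide_left_mono mult_right_mono mult_pos_pos) (auto simp: e_def)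
  also have "\<dots> = 4 / (c * m) * e" using m assms(2) by (simp add: field_simps)
  finally show ?thesis by (simp add: K_def m_def e_def)
qed

lemma inner_normalized_minus_1_bigo:
  fixes K :: "'b \<Rightarrow> 'a::real_inner" and g :: "'b \<Rightarrow> real"
  assumes "M \<noteq> 0" and "c > 0"
    and bigo: "(\<lambda>x. norm (K x - c *\<^sub>R M)) \<in> O[F](g)" and "(g \<longlongrightarrow> 0) F"
  shows "(\<lambda>x. inner (K x) M / (norm (K x) * norm M) - 1) \<in> O[F](g)"
proof -
  obtain C where C: "eventually (\<lambda>x. norm (K x - c *\<^sub>R M) \<le> C * norm (g x)) F"
    using bigo by (auto elim: landau_o.bigE)
  have "((\<lambda>x. C * norm (g x)) \<longlongrightarrow> 0) F"
    using assms(4) by (auto intro!: tendsto_eq_intros)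
  moreover have "c * norm M / 2 > 0" using assms(1,2) by simp
  ultimately have "eventually (\<lambda>x. C * norm (g x) < c * norm M / 2) F"
    by (rule order_tendstoD(2))
  with C have "eventually (\<lambda>x. norm (K x - c *\<^sub>R M) \<le> c * norm M / 2) F"
    by eventually_elim simp
  then have "eventually (\<lambda>x. norm (inner (K x) M / (norm (K x) * norm M) - 1)
      \<le> 4 / (c * norm M) * norm (norm (K x - c *\<^sub>R M))) F"
  proof eventually_elim
    case (elim x)
    show ?case
      using inner_normalized_perturbation_bound[OF assms(1,2) elim] by simp
  qed
  then have "(\<lambda>x. inner (K x) M / (norm (K x) * norm M) - 1) \<in> O[F](\<lambda>x. norm (K x - c *\<^sub>R M))"
    by (rule bigoI)
  then show ?thesis using bigo by (rule landau_o.big_trans)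
qed

theorem proposition1:
  fixes X :: "real^'m^'d"
    and \<beta> :: "real^'d"
    and i1 :: "'n::finite"
    and W2 :: "real \<Rightarrow> real^'n"
    and Kf :: "real \<Rightarrow> real^'m^'m"
  assumes "CARD('d) \<le> CARD('m)"
    and "X ** transpose X = mat 1"
    and "\<beta> \<noteq> 0"
    and "\<And>\<sigma>. \<sigma> > 0 \<Longrightarrow> norm (W2 \<sigma>) = \<sigma>"
    and "(\<lambda>\<sigma>. frob_norm (Kf \<sigma> - norm \<beta> *\<^sub>R
            (transpose X ** (outer (\<beta> /\<^sub>R norm \<beta>) (\<beta> /\<^sub>R norm \<beta>) + mat 1) ** X)))
          \<in> O[at_right 0](\<lambda>\<sigma>. \<sigma>^2)"
  shows "(let \<beta>h = \<beta> /\<^sub>R norm \<beta>;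
              W1 = (\<lambda>\<sigma>::real. (\<chi> i. if i = i1 then \<sigma> *\<^sub>R \<beta>h else 0) :: real^'d^'n);
              K0 = (\<lambda>\<sigma>. transpose X ** (transpose (W1 \<sigma>) ** W1 \<sigma> + (norm (W2 \<sigma>))^2 *\<^sub>R mat 1) ** X)
          in (\<lambda>\<sigma>. kernel_alignment (Kf \<sigma>) (K0 \<sigma>) - 1) \<in> O[at_right 0](\<lambda>\<sigma>. \<sigma>^2))"
proof -
  define \<beta>h where "\<beta>h = \<beta> /\<^sub>R norm \<beta>"
  define M where "M = transpose X ** (outer \<beta>h \<beta>h + mat 1) ** X"
  have "M \<noteq> 0"
    using conj_semi_orthogonal_eq_0_iff[OF assms(2)] outer_self_add_mat_1_neq_0 by (simp add: M_def)
  have M_symmetric: "transpose M = M"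
    by (simp add: M_def matrix_transpose_mul transpose_add transpose_outer matrix_mul_assoc)
  have K0: "transpose X ** (transpose W ** W + (norm (W2 \<sigma>))^2 *\<^sub>R mat 1) ** X = \<sigma>^2 *\<^sub>R M"
    if "\<sigma> > 0" and "W = (\<chi> i. if i = i1 then \<sigma> *\<^sub>R \<beta>h else 0)" for \<sigma> and W :: "real^'d^'n"
    using that assms(4)[of \<sigma>]
    by (simp add: transpose_mult_single_row outer_scaleR M_def power2_eq_square
        scaleR_right_distrib[symmetric] matrix_scalar_ac scalar_matrix_assoc[symmetric])
  have "(\<lambda>\<sigma>. inner (Kf \<sigma>) M / (norm (Kf \<sigma>) * norm M) - 1) \<in> O[at_right 0](\<lambda>\<sigma>. \<sigma>^2)"
    using \<open>M \<noteq> 0\<close> assms(3,5)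
    by (intro inner_normalized_minus_1_bigo[where c = "norm \<beta>"])
       (auto simp: M_def \<beta>h_def frob_norm_eq_norm intro!: tendsto_eq_intros)
  moreover have "eventually (\<lambda>\<sigma>. (0::real) < \<sigma>) (at_right 0)"
    by (rule eventually_at_right_less)
  ultimately show ?thesis
    unfolding Let_def \<beta>h_def[symmetric]
    by (elim landau_o.big.in_cong[THEN iffD1, rotated] eventually_mono)
       (simp add: K0 kernel_alignment_scaleR_symmetric M_symmetric)
qed

end
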